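(* Let $\Gamma$ be a countable group, $E$ a countable free $\Gamma$-set, $\Gamma\curvearrowright(X,\mu)$ a free standard $\Gamma$-space, and $P=(W_s)_{s\in S}$ a $\Gamma$-equivariant $\mu$-partition of $X\times E$ of finite type, with $S$ countable. Then \[\Phi^P\colon\mathbb{Z}[E^{*+1}]\to L^\infty_{fs}(X\times S^{*+1};\mathbb{Z}),\qquad (e_0,\dots,e_n)\mapsto\big((x,s_0,\dots,s_n)\mapsto\chi_{W_{(s_0,\dots,s_n)}}(x,e_0,\dots,e_n)\big)\] is a well-defined $\mathbb{Z}\Gamma$-chain map that extends the inclusion $\mathbb{Z}\hookrightarrow L^\infty(X;\mathbb{Z})$.
   Context: A standard $\Gamma$-space is a measure preserving action on a standard Borel probability space $(X,\mu)$. A $\Gamma$-equivariant $\mu$-partition of $X\times E$ is a family $(W_s)_{s\in S}$ of pairwise disjoint Borel subsets of $X\times E$ whose union is conull for $\mu\otimes$(counting measure), where $S$ carries a free $\Gamma$-action with $\gamma\cdot W_s=W_{\gamma s}$ (diagonal action on $X\times E$). It is of finite type if for each $e\in E$ only finitely many $s$ satisfy $W_s\cap(X\times\{e\})\neq\emptyset$. For $s=(s_0,\dots,s_n)\in S^{n+1}$, $W_{s}:=\{(x,e_0,\dots,e_n): (x,e_r)\in W_{s_r}\ \forall r\}$. $L^\infty_{fs}(X\times S^{n+1};\mathbb{Z})$ is the $\mathbb{Z}\Gamma$-module of (classes of) essentially bounded measurable $f\colon X\times S^{n+1}\to\mathbb{Z}$ supported in $X\times F$ for a finite $F\subset S^{n+1}$,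 with diagonal $\Gamma$-action, boundary $(\partial_nf)(x,s_0,\dots,s_{n-1})=\sum_{j=0}^n(-1)^j\sum_{t\in S}f(x,s_0,\dots,s_{j-1},t,s_j,\dots,s_{n-1})$, augmentation $\tilde\varepsilon_Sf=\sum_sf(\cdot,s)$. $\mathbb{Z}[E^{*+1}]$ has the simplicial boundary and augmentation $\varepsilon_E(e)=1$. Extending the inclusion $\iota$ of constants means $\tilde\varepsilon_S\circ\Phi^P_0=\iota\circ\varepsilon_E$. *)

theory Defs
  imports "HOL-Probability.Probability"
begin

definition group_action :: "('g::group_add \<Rightarrow> 'a \<Rightarrow> 'a) \<Rightarrow> bool" where
  "group_action act \<longleftrightarrow> (\<forall>x. act 0 x = x) \<and> (\<forall>g h x. act (g + h) x = act g (act h x))"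

definition free_action :: "('g::group_add \<Rightarrow> 'a \<Rightarrow> 'a) \<Rightarrow> bool" where
  "free_action act \<longleftrightarrow> (\<forall>g x. act g x = x \<longrightarrow> g = 0)"

text \<open>Standard Gamma-space: measure preserving action on a standard Borel probability space.
  The space is modelled as a Polish space with its Borel sigma-algebra.\<close>
definition standard_gamma_space :: "'x::polish_space measure \<Rightarrow> ('g::group_add \<Rightarrow> 'x \<Rightarrow> 'x) \<Rightarrow> bool" where
  "standard_gamma_space M act \<longleftrightarrow> prob_space M \<and> sets M = sets borel \<and> group_action act \<and>
     (\<forall>g. act g \<in> measurable M M \<and> distr M M (act g) = M)"

definition ess_free :: "'x measure \<Rightarrow> ('g::group_add \<Rightarrow> 'x \<Rightarrow> 'x) \<Rightarrow> bool" where
  "ess_free M act \<longleftrightarrow> (AE x in M. \<forall>g. act g x = x \<longrightarrow> g = 0)"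

definition equivariant_partition ::
  "'x measure \<Rightarrow> ('g::group_add \<Rightarrow> 'x \<Rightarrow> 'x) \<Rightarrow> ('g \<Rightarrow> 'e \<Rightarrow> 'e) \<Rightarrow> ('g \<Rightarrow> 's \<Rightarrow> 's)
     \<Rightarrow> ('s \<Rightarrow> ('x \<times> 'e) set) \<Rightarrow> bool" where
  "equivariant_partition M actX actE actS W \<longleftrightarrow>
     group_action actS \<and> free_action actS \<and>
     (\<forall>s. W s \<in> sets (M \<Otimes>\<^sub>M count_space UNIV)) \<and>
     disjoint_family W \<and>
     (space (M \<Otimes>\<^sub>M count_space UNIV) - (\<Union>s. W s)) \<in> null_sets (M \<Otimes>\<^sub>M count_space UNIV) \<and>
     (\<forall>g s. (\<lambda>(x, e). (actX g x, actE g e)) ` W s = W (actS g s))"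

definition finite_type :: "('s \<Rightarrow> ('x \<times> 'e) set) \<Rightarrow> bool" where
  "finite_type W \<longleftrightarrow> (\<forall>e. finite {s. W s \<inter> (UNIV \<times> {e}) \<noteq> {}})"

text \<open>W_{(s_0,...,s_n)} as a set of (x, [e_0,...,e_n]).\<close>
definition Wtup :: "('s \<Rightarrow> ('x \<times> 'e) set) \<Rightarrow> 's list \<Rightarrow> ('x \<times> 'e list) set" where
  "Wtup W ss = {(x, es). length es = length ss \<and> (\<forall>r < length ss. (x, es ! r) \<in> W (ss ! r))}"

text \<open>A degree n chain: finitely supported integer function on (n+1)-tuples (lists of length n+1).\<close>
definition supp :: "('a \<Rightarrow> int) \<Rightarrow> 'a set" where
  "supp c = {a. c a \<noteq> 0}"

definition zchain :: "nat \<Rightarrow> ('e list \<Rightarrow> int) \<Rightarrow> bool" where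
  "zchain n c \<longleftrightarrow> finite (supp c) \<and> (\<forall>es \<in> supp c. length es = Suc n)"

definition del_at :: "nat \<Rightarrow> 'a list \<Rightarrow> 'a list" where
  "del_at j xs = take j xs @ drop (Suc j) xs"

definition ins_at :: "nat \<Rightarrow> 'a \<Rightarrow> 'a list \<Rightarrow> 'a list" where
  "ins_at j t xs = take j xs @ t # drop j xs"

definition bdE :: "('e list \<Rightarrow> int) \<Rightarrow> 'e list \<Rightarrow> int" where
  "bdE c ds = (\<Sum>es \<in> supp c. c es * (\<Sum>j < length es. if del_at j es = ds then (-1) ^ j else 0))"

definition augE :: "('e list \<Rightarrow> int) \<Rightarrow> int" where
  "augE c = (\<Sum>es \<in> supp c. c es)"

definition actC :: "('g::group_add \<Rightarrow> 'e \<Rightarrow> 'e) \<Rightarrow> 'g \<Rightarrow> ('e list \<Rightarrow> int) \<Rightarrow> 'e list \<Rightarrow> int" where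
  "actC actE g c es = c (map (actE (- g)) es)"

text \<open>Functions f x ss, where ss ranges over (n+1)-tuples of S (lists of length n+1).\<close>
definition tuples :: "nat \<Rightarrow> 's list set" where
  "tuples n = {ss. length ss = Suc n}"

definition Linf_fs :: "'x measure \<Rightarrow> nat \<Rightarrow> ('x \<Rightarrow> 's list \<Rightarrow> int) \<Rightarrow> bool" where
  "Linf_fs M n f \<longleftrightarrow>
     (\<lambda>(x, ss). f x ss) \<in> measurable (M \<Otimes>\<^sub>M count_space (tuples n)) (count_space UNIV) \<and>
     (\<exists>B. AE p in M \<Otimes>\<^sub>M count_space (tuples n). \<bar>f (fst p) (snd p)\<bar> \<le> B) \<and>
     (\<exists>F. finite F \<and> F \<subseteq> tuples n \<and> (\<forall>x ss. ss \<notin> F \<longrightarrow> f x ss = 0))"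

text \<open>Equality of classes: almost everywhere for mu tensor counting measure on S^{n+1}.\<close>
definition aeq :: "'x measure \<Rightarrow> nat \<Rightarrow> ('x \<Rightarrow> 's list \<Rightarrow> int) \<Rightarrow> ('x \<Rightarrow> 's list \<Rightarrow> int) \<Rightarrow> bool" where
  "aeq M n f g \<longleftrightarrow> (AE p in M \<Otimes>\<^sub>M count_space (tuples n). f (fst p) (snd p) = g (fst p) (snd p))"

definition bdL :: "('x \<Rightarrow> 's list \<Rightarrow> int) \<Rightarrow> 'x \<Rightarrow> 's list \<Rightarrow> int" where
  "bdL f x ss = (\<Sum>j \<le> length ss. (-1) ^ j *
       (\<Sum>t \<in> {t. f x (ins_at j t ss) \<noteq> 0}. f x (ins_at j t ss)))"

definition augS :: "('x \<Rightarrow> 's list \<Rightarrow> int) \<Rightarrow> 'x \<Rightarrow> int" where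
  "augS f x = (\<Sum>s \<in> {s. f x [s] \<noteq> 0}. f x [s])"

definition actL :: "('g::group_add \<Rightarrow> 'x \<Rightarrow> 'x) \<Rightarrow> ('g \<Rightarrow> 's \<Rightarrow> 's) \<Rightarrow> 'g
    \<Rightarrow> ('x \<Rightarrow> 's list \<Rightarrow> int) \<Rightarrow> 'x \<Rightarrow> 's list \<Rightarrow> int" where
  "actL actX actS g f x ss = f (actX (- g) x) (map (actS (- g)) ss)"

definition Phi :: "('s \<Rightarrow> ('x \<times> 'e) set) \<Rightarrow> nat \<Rightarrow> ('e list \<Rightarrow> int) \<Rightarrow> 'x \<Rightarrow> 's list \<Rightarrow> int" where
  "Phi W n c x ss = (if length ss = Suc n
      then (\<Sum>es \<in> supp c. c es * indicator (Wtup W ss) (x, es)) else 0)"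

end

(*
  Since the cells W s partition X \<times> E up to a null set and E is countable, for almost every x
  each e lies in exactly one cell.  For such x, summing \<chi>_{W (s_0,..,t,..,s_{n-1})}(x, e_0,..,e_n)
  over the inserted cell t merely forgets the coordinate e_j, so the boundary of L\<^sup>\<infinity>_fs
  corresponds to the simplicial boundary and the augmentation of S to that of E.  Equivariance is
  inherited from \<gamma> W_s = W_{\<gamma> s}, and finite type confines the support of \<Phi>(c) to
  tuples of the finitely many cells meeting X \<times> {e} for the entries e of the simplices of c.
*)
theory Submission
  imports Defs
begin

lemma length_ins_at [simp]: "length (ins_at j t xs) = Suc (length xs)"
  unfolding ins_at_def by auto

lemma nth_ins_at:
  "j \<le> length xs \<Longrightarrow> r < Suc (length xs) \<Longrightarrow>
    ins_at j t xs ! r = (if r < j then xs ! r else if r = j then t else xs ! (r - 1))"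
  unfolding ins_at_def by (auto simp: nth_append min_def nth_Cons' split: if_splits)

lemma length_del_at [simp]: "j < length xs \<Longrightarrow> length (del_at j xs) = length xs - 1"
  unfolding del_at_def by auto

lemma nth_del_at:
  "j < length xs \<Longrightarrow> r < length xs - 1 \<Longrightarrow> del_at j xs ! r = (if r < j then xs ! r else xs ! Suc r)"
  unfolding del_at_def by (auto simp: nth_append min_def)

lemma mem_Wtup_ins_at:
  assumes len: "length es = Suc (length ss)" and j: "j \<le> length ss"
  shows "(x, es) \<in> Wtup W (ins_at j t ss) \<longleftrightarrow> (x, del_at j es) \<in> Wtup W ss \<and> (x, es ! j) \<in> W t"
proof -
  have "(\<forall>r<Suc (length ss). (x, es ! r) \<in> W (ins_at j t ss ! r)) \<longleftrightarrow>
      (\<forall>r<length ss. (x, es ! (if r < j then r else Suc r)) \<in> W (ss ! r)) \<and> (x, es ! j) \<in> W t"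
    (is "?L \<longleftrightarrow> ?R")
  proof
    assume L: ?L
    show ?R
    proof (intro conjI allI impI)
      fix r assume "r < length ss"
      then show "(x, es ! (if r < j then r else Suc r)) \<in> W (ss ! r)"
        using L[rule_format, of "if r < j then r else Suc r"] j by (auto simp: nth_ins_at)
    qed (use L[rule_format, of j] j in \<open>simp add: nth_ins_at\<close>)
  next
    assume R: ?R
    show ?L
    proof (intro allI impI)
      fix r assume r: "r < Suc (length ss)"
      consider "r < j" | "r = j" | "j < r" by linarith
      then show "(x, es ! r) \<in> W (ins_at j t ss ! r)"
      proof cases
        case 1
        then show ?thesis using R[THEN conjunct1, rule_format, of r] r j by (simp add: nth_ins_at)
      next
        case 3
        then obtain r' where "r = Suc r'" "j \<le> r'" by (cases r) auto
        then show ?thesis using R[THEN conjunct1, rule_format, of r'] r j by (simp add: nth_ins_at)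
      qed (use R r j in \<open>simp add: nth_ins_at\<close>)
    qed
  qed
  moreover have "del_at j es ! r = es ! (if r < j then r else Suc r)" if "r < length ss" for r
    using that len j by (simp add: nth_del_at)
  ultimately show ?thesis
    using len j by (simp add: Wtup_def)
qed

lemma sum_supp_extend:
  fixes c :: "'a \<Rightarrow> int"
  assumes "finite U" "supp c \<subseteq> U"
  shows "(\<Sum>a\<in>supp c. c a * h a) = (\<Sum>a\<in>U. c a * h a)"
  by (rule sum.mono_neutral_left) (use assms in \<open>auto simp: supp_def\<close>)

lemma sum_partition_indicator:
  fixes a :: "'b \<Rightarrow> int"
  assumes fin: "finite B" and disj: "disjoint_family W"
    and cov: "\<And>b. b \<in> B \<Longrightarrow> \<exists>s. (x, k b) \<in> W s"
  defines "F \<equiv> \<lambda>t. \<Sum>b\<in>B. a b * indicator (W t) (x, k b)"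
  shows "(\<Sum>t\<in>{t. F t \<noteq> 0}. F t) = (\<Sum>b\<in>B. a b)"
proof -
  define cell where "cell b = (SOME s. (x, k b) \<in> W s)" for b
  have in_cell: "(x, k b) \<in> W t \<longleftrightarrow> t = cell b" if "b \<in> B" for b t
    using someI_ex[OF cov[OF that]] disj unfolding cell_def disjoint_family_on_def by blast
  have F: "F t = (\<Sum>b\<in>B. if cell b = t then a b else 0)" for t
    unfolding F_def by (rule sum.cong) (auto simp: in_cell indicator_def)
  have "{t. F t \<noteq> 0} \<subseteq> cell ` B"
    by (auto simp: F elim!: sum.not_neutral_contains_not_neutral split: if_splits)
  then have "(\<Sum>t\<in>{t. F t \<noteq> 0}. F t) = (\<Sum>t\<in>cell ` B. F t)"
    by (intro sum.mono_neutral_left) (use fin in auto)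
  also have "\<dots> = (\<Sum>b\<in>B. \<Sum>t\<in>cell ` B. if cell b = t then a b else 0)"
    unfolding F by (rule sum.swap)
  also have "\<dots> = (\<Sum>b\<in>B. a b)"
    by (rule sum.cong) (use fin in auto)
  finally show ?thesis .
qed

lemma group_action_cancel:
  assumes "group_action act"
  shows "act g (act (- g) y) = y" and "act (- g) (act g y) = y"
  using assms unfolding group_action_def by (metis add.right_inverse, metis add.left_inverse)

lemma sets_Wtup_section:
  assumes "\<forall>s. W s \<in> sets (M \<Otimes>\<^sub>M count_space UNIV)"
  shows "{x \<in> space M. (x, es) \<in> Wtup W ss} \<in> sets M"
proof (cases "length es = length ss")
  case True
  have cell: "{x \<in> space M. (x, e) \<in> W s} \<in> sets M" for e s
  proof -
    have "{x \<in> space M. (x, e) \<in> W s} = (\<lambda>x. (x, e)) -` W s \<inter> space M" by auto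
    then show ?thesis
      using measurable_sets[OF measurable_Pair2' assms[rule_format]] by simp
  qed
  have "{x \<in> space M. (x, es) \<in> Wtup W ss} = {x \<in> space M. \<forall>r\<in>{..<length ss}. (x, es ! r) \<in> W (ss ! r)}"
    using True by (auto simp: Wtup_def)
  also have "\<dots> \<in> sets M"
    by (rule sets.sets_Collect_finite_All) (use cell in auto)
  finally show ?thesis .
next
  case False
  then show ?thesis by (simp add: Wtup_def)
qed

lemma measurable_Phi:
  assumes "\<forall>s. W s \<in> sets (M \<Otimes>\<^sub>M count_space UNIV)"
  shows "(\<lambda>x. Phi W n c x ss) \<in> measurable M (count_space UNIV)"
proof -
  have "(\<lambda>x. real_of_int (Phi W n c x ss)) \<in> borel_measurable M"
  proof (cases "length ss = Suc n")
    case True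
    have "(\<lambda>x. real_of_int (Phi W n c x ss)) =
        (\<lambda>x. \<Sum>es\<in>supp c. real_of_int (c es) * indicator (Wtup W ss) (x, es))"
      using True by (auto simp: Phi_def indicator_def)
    then show ?thesis
      using sets_Wtup_section[OF assms]
      by (simp add: borel_measurable_sum borel_measurable_times borel_measurable_indicator')
  qed (simp add: Phi_def)
  from measurable_compose[OF this measurable_real_floor] show ?thesis
    by simp
qed

lemma abs_Phi_le: "\<bar>Phi W n c x ss\<bar> \<le> (\<Sum>es\<in>supp c. \<bar>c es\<bar>)"
proof (cases "length ss = Suc n")
  case True
  then have "\<bar>Phi W n c x ss\<bar> \<le> (\<Sum>es\<in>supp c. \<bar>c es * indicator (Wtup W ss) (x, es)\<bar>)"
    by (simp add: Phi_def sum_abs)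
  also have "\<dots> \<le> (\<Sum>es\<in>supp c. \<bar>c es\<bar>)"
    by (rule sum_mono) (auto simp: indicator_def)
  finally show ?thesis .
qed (simp add: Phi_def sum_nonneg)

lemma Phi_finite_support:
  assumes ft: "finite_type W" and zc: "zchain n c"
  shows "\<exists>F. finite F \<and> F \<subseteq> tuples n \<and> (\<forall>x ss. ss \<notin> F \<longrightarrow> Phi W n c x ss = 0)"
proof -
  define T where "T = (\<Union>es\<in>supp c. \<Union>e\<in>set es. {s. W s \<inter> (UNIV \<times> {e}) \<noteq> {}})"
  have "finite T"
    using zc ft by (auto simp: T_def zchain_def finite_type_def)
  then have "finite {ss. set ss \<subseteq> T \<and> length ss = Suc n}"
    by (rule finite_lists_length_eq)
  moreover have "Phi W n c x ss = 0" if "\<not> (set ss \<subseteq> T \<and> length ss = Suc n)" for x ss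
  proof (rule ccontr)
    assume "Phi W n c x ss \<noteq> 0"
    then obtain es where len: "length ss = Suc n" and es: "es \<in> supp c" "(x, es) \<in> Wtup W ss"
      by (auto simp: Phi_def indicator_def elim: sum.not_neutral_contains_not_neutral split: if_splits)
    have "set ss \<subseteq> T"
    proof
      fix s assume "s \<in> set ss"
      then obtain r where "r < length ss" "s = ss ! r" by (auto simp: in_set_conv_nth)
      with es show "s \<in> T"
        unfolding T_def Wtup_def by (auto intro!: bexI[of _ es] bexI[of _ "es ! r"])
    qed
    with that len show False by blast
  qed
  ultimately show ?thesis
    by (intro exI[of _ "{ss. set ss \<subseteq> T \<and> length ss = Suc n}"]) (auto simp: tuples_def)
qed

lemma Linf_fs_Phi:
  fixes W :: "'s::countable \<Rightarrow> ('x \<times> 'e) set"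
  assumes "\<forall>s. W s \<in> sets (M \<Otimes>\<^sub>M count_space UNIV)" and "finite_type W" and "zchain n c"
  shows "Linf_fs M n (Phi W n c)"
proof -
  have "(\<lambda>(ss, x). Phi W n c x ss) \<in> measurable (count_space (tuples n) \<Otimes>\<^sub>M M) (count_space UNIV)"
    by (rule measurable_pair_measure_countable1) (simp_all add: measurable_Phi[OF assms(1)])
  then have "(\<lambda>(x, ss). Phi W n c x ss) \<in> measurable (M \<Otimes>\<^sub>M count_space (tuples n)) (count_space UNIV)"
    by (subst measurable_pair_swap_iff) simp
  then show ?thesis
    unfolding Linf_fs_def using abs_Phi_le Phi_finite_support[OF assms(2,3)]
    by (intro conjI exI[of _ "\<Sum>es\<in>supp c. \<bar>c es\<bar>"] AE_I2)
qed

lemma Phi_add: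
  assumes "zchain n c" "zchain n d"
  shows "Phi W n (\<lambda>es. c es + d es) x ss = Phi W n c x ss + Phi W n d x ss"
proof (cases "length ss = Suc n")
  case True
  define U where "U = supp c \<union> supp d"
  have U: "finite U" "supp c \<subseteq> U" "supp d \<subseteq> U" "supp (\<lambda>es. c es + d es) \<subseteq> U"
    using assms by (auto simp: U_def zchain_def supp_def)
  let ?I = "\<lambda>es. indicator (Wtup W ss) (x, es) :: int"
  have "Phi W n (\<lambda>es. c es + d es) x ss = (\<Sum>es\<in>U. (c es + d es) * ?I es)"
    using True sum_supp_extend[OF U(1,4)] by (simp add: Phi_def)
  also have "\<dots> = (\<Sum>es\<in>U. c es * ?I es) + (\<Sum>es\<in>U. d es * ?I es)"
    by (simp add: distrib_right sum.distrib)
  also have "\<dots> = Phi W n c x ss + Phi W n d x ss"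
    using True sum_supp_extend[OF U(1,2)] sum_supp_extend[OF U(1,3)] by (simp add: Phi_def)
  finally show ?thesis .
qed (simp add: Phi_def)

lemma mem_W_act_iff:
  assumes "group_action actX" "group_action actE" "group_action actS"
    and eqv: "\<forall>g s. (\<lambda>(x, e). (actX g x, actE g e)) ` W s = W (actS g s)"
  shows "(x, actE g e) \<in> W s \<longleftrightarrow> (actX (- g) x, e) \<in> W (actS (- g) s)"
proof -
  have act_mem: "(actX h a, actE h b) \<in> W (actS h s)" if "(a, b) \<in> W s" for h a b s
    using that eqv[rule_format, of h s] by force
  show ?thesis
    using act_mem[of x "actE g e" s "- g"] act_mem[of "actX (- g) x" e "actS (- g) s" g]
    by (auto simp: group_action_cancel assms(1-3))
qed

lemma Wtup_act_iff:
  assumes "group_action actX" "group_action actE" "group_action actS"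
    and "\<forall>g s. (\<lambda>(x, e). (actX g x, actE g e)) ` W s = W (actS g s)"
  shows "(x, map (actE g) es) \<in> Wtup W ss \<longleftrightarrow> (actX (- g) x, es) \<in> Wtup W (map (actS (- g)) ss)"
  unfolding Wtup_def using mem_W_act_iff[OF assms] by auto

lemma supp_actC:
  assumes "group_action actE"
  shows "supp (actC actE g c) = map (actE g) ` supp c"
proof -
  have "map (actE g) (map (actE (- g)) es) = es" "map (actE (- g)) (map (actE g) es) = es" for es
    by (simp_all add: comp_def group_action_cancel[OF assms])
  then show ?thesis
    unfolding supp_def actC_def by (auto intro: image_eqI[where x = "map (actE (- g)) _"])
qed

lemma Phi_actC:
  assumes "group_action actX" "group_action actE" "group_action actS"
    and "\<forall>g s. (\<lambda>(x, e). (actX g x, actE g e)) ` W s = W (actS g s)"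
  shows "Phi W n (actC actE g c) x ss = actL actX actS g (Phi W n c) x ss"
proof (cases "length ss = Suc n")
  case True
  have cancel: "map (actE (- g) \<circ> actE g) es = es" for es
    by (simp add: comp_def group_action_cancel[OF assms(2)])
  then have inj: "inj_on (map (actE g)) (supp c)"
    by (metis inj_onI map_map)
  have "Phi W n (actC actE g c) x ss =
      (\<Sum>es\<in>map (actE g) ` supp c. c (map (actE (- g)) es) * indicator (Wtup W ss) (x, es))"
    using True by (simp add: Phi_def supp_actC[OF assms(2)] actC_def)
  also have "\<dots> = (\<Sum>es\<in>supp c. c es * indicator (Wtup W ss) (x, map (actE g) es))"
    by (simp add: sum.reindex[OF inj] cancel)
  also have "\<dots> = (\<Sum>es\<in>supp c. c es * indicator (Wtup W (map (actS (- g)) ss)) (actX (- g) x, es))"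
    by (simp add: indicator_def Wtup_act_iff[OF assms])
  also have "\<dots> = actL actX actS g (Phi W n c) x ss"
    using True by (simp add: actL_def Phi_def)
  finally show ?thesis .
qed (simp add: Phi_def actL_def)

lemma sum_bdE:
  fixes c :: "'e list \<Rightarrow> int"
  assumes fin: "finite (supp c)"
  shows "(\<Sum>ds\<in>supp (bdE c). bdE c ds * h ds) =
    (\<Sum>es\<in>supp c. c es * (\<Sum>j<length es. (-1) ^ j * h (del_at j es)))"
proof -
  define D where "D = (\<lambda>(es, j). del_at j es) ` (SIGMA es:supp c. {..<length es})"
  have "finite D"
    unfolding D_def using fin by auto
  have faces_in_D: "del_at j es \<in> D" if "es \<in> supp c" "j < length es" for es j
    unfolding D_def using that by force
  have "supp (bdE c) \<subseteq> D"
    by (auto simp: supp_def bdE_def faces_in_D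
        elim!: sum.not_neutral_contains_not_neutral split: if_splits)
  then have "(\<Sum>ds\<in>supp (bdE c). bdE c ds * h ds) = (\<Sum>ds\<in>D. bdE c ds * h ds)"
    by (rule sum_supp_extend[OF \<open>finite D\<close>])
  also have "\<dots> = (\<Sum>es\<in>supp c. c es * (\<Sum>j<length es. \<Sum>ds\<in>D.
      if del_at j es = ds then (-1) ^ j * h ds else 0))"
    unfolding bdE_def
    by (simp add: sum_distrib_left sum_distrib_right sum.swap[of _ D] if_distrib if_distribR mult_ac
        cong: if_cong)
  also have "\<dots> = (\<Sum>es\<in>supp c. c es * (\<Sum>j<length es. (-1) ^ j * h (del_at j es)))"
    by (intro sum.cong refl arg_cong2[where f = "(*)"]) (simp add: sum.delta'[OF \<open>finite D\<close>] faces_in_D)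
  finally show ?thesis .
qed

lemma sum_Phi_ins_at:
  assumes disj: "disjoint_family W" and zc: "zchain (Suc n) c" and cov: "\<forall>e. \<exists>s. (x, e) \<in> W s"
    and len: "length ss = Suc n" and j: "j \<le> length ss"
  shows "(\<Sum>t\<in>{t. Phi W (Suc n) c x (ins_at j t ss) \<noteq> 0}. Phi W (Suc n) c x (ins_at j t ss))
    = (\<Sum>es\<in>supp c. c es * indicator (Wtup W ss) (x, del_at j es))"
proof -
  let ?a = "\<lambda>es. c es * indicator (Wtup W ss) (x, del_at j es) :: int"
  have "Phi W (Suc n) c x (ins_at j t ss) = (\<Sum>es\<in>supp c. ?a es * indicator (W t) (x, es ! j))" for t
  proof -
    have "length es = Suc (length ss)" if "es \<in> supp c" for es
      using that zc len by (simp add: zchain_def)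
    then show ?thesis
      using len by (auto simp: Phi_def indicator_def mem_Wtup_ins_at[OF _ j] intro!: sum.cong)
  qed
  moreover have "finite (supp c)"
    using zc by (simp add: zchain_def)
  ultimately show ?thesis
    using sum_partition_indicator[OF _ disj, of "supp c" x "\<lambda>es. es ! j" ?a] cov by simp
qed

lemma bdL_Phi:
  assumes disj: "disjoint_family W" and zc: "zchain (Suc n) c" and cov: "\<forall>e. \<exists>s. (x, e) \<in> W s"
  shows "bdL (Phi W (Suc n) c) x ss = Phi W n (bdE c) x ss"
proof (cases "length ss = Suc n")
  case True
  define I where "I ds = (indicator (Wtup W ss) (x, ds) :: int)" for ds
  have len: "length es = Suc (length ss)" if "es \<in> supp c" for es
    using that zc True by (simp add: zchain_def)
  have "bdL (Phi W (Suc n) c) x ss = (\<Sum>j\<le>length ss. (-1) ^ j * (\<Sum>es\<in>supp c. c es * I (del_at j es)))"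
    unfolding bdL_def I_def using sum_Phi_ins_at[OF disj zc cov True] by simp
  also have "\<dots> = (\<Sum>es\<in>supp c. c es * (\<Sum>j\<le>length ss. (-1) ^ j * I (del_at j es)))"
    by (simp add: sum_distrib_left sum.swap[of _ "{..length ss}"] mult_ac)
  also have "\<dots> = (\<Sum>es\<in>supp c. c es * (\<Sum>j<length es. (-1) ^ j * I (del_at j es)))"
    by (intro sum.cong refl) (simp add: len lessThan_Suc_atMost)
  also have "\<dots> = Phi W n (bdE c) x ss"
    using True zc by (simp add: Phi_def I_def sum_bdE zchain_def)
  finally show ?thesis .
qed (simp add: bdL_def Phi_def)

lemma augS_Phi:
  assumes disj: "disjoint_family W" and zc: "zchain 0 c" and cov: "\<forall>e. \<exists>s. (x, e) \<in> W s"
  shows "augS (Phi W 0 c) x = augE c"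
proof -
  have "length es = 1" if "es \<in> supp c" for es
    using that zc by (simp add: zchain_def)
  then have "Phi W 0 c x [s] = (\<Sum>es\<in>supp c. c es * indicator (W s) (x, es ! 0))" for s
    by (auto simp: Phi_def Wtup_def indicator_def intro!: sum.cong)
  moreover have "finite (supp c)"
    using zc by (simp add: zchain_def)
  ultimately show ?thesis
    unfolding augS_def augE_def
    using sum_partition_indicator[OF _ disj, of "supp c" x "\<lambda>es. es ! 0" c] cov by simp
qed

lemma AE_pair_fst:
  assumes "sigma_finite_measure N" and "AE x in M. P x"
  shows "AE p in M \<Otimes>\<^sub>M N. P (fst p)"
proof -
  from assms(2) obtain A where A: "{x \<in> space M. \<not> P x} \<subseteq> A" "A \<in> null_sets M"
    by (auto elim!: AE_E)
  have "emeasure (M \<Otimes>\<^sub>M N) (A \<times> space N) = emeasure M A * emeasure N (space N)"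
    using A(2) by (intro sigma_finite_measure.emeasure_pair_measure_Times[OF assms(1)]) auto
  with A(2) have "A \<times> space N \<in> null_sets (M \<Otimes>\<^sub>M N)"
    by (simp add: null_sets_def)
  then show ?thesis
    by (rule AE_I') (use A(1) in \<open>auto simp: space_pair_measure\<close>)
qed

lemma AE_in_some_cell:
  fixes W :: "'s \<Rightarrow> ('x \<times> 'e::countable) set"
  assumes "sigma_finite_measure M"
    and "space (M \<Otimes>\<^sub>M count_space UNIV) - (\<Union>s. W s) \<in> null_sets (M \<Otimes>\<^sub>M count_space UNIV)"
  shows "AE x in M. \<forall>e. \<exists>s. (x, e) \<in> W s"
proof -
  interpret pair_sigma_finite M "count_space (UNIV :: 'e set)"
    by (intro pair_sigma_finite.intro assms(1) sigma_finite_measure_count_space_countable) simp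
  have "AE p in M \<Otimes>\<^sub>M count_space UNIV. p \<in> (\<Union>s. W s)"
    by (rule AE_I'[OF assms(2)]) auto
  then have "AE x in M. AE e in count_space UNIV. (x, e) \<in> (\<Union>s. W s)"
    by (rule AE_pair)
  then show ?thesis
    by (rule eventually_mono) (auto simp: AE_count_space)
qed

theorem proposition4p5:
  fixes M :: "'x::polish_space measure"
    and actX :: "'g::{group_add,countable} \<Rightarrow> 'x \<Rightarrow> 'x"
    and actE :: "'g \<Rightarrow> 'e::countable \<Rightarrow> 'e"
    and actS :: "'g \<Rightarrow> 's::countable \<Rightarrow> 's"
    and W :: "'s \<Rightarrow> ('x \<times> 'e) set"
  assumes "standard_gamma_space M actX"
    and "ess_free M actX"
    and "group_action actE" and "free_action actE"
    and "equivariant_partition M actX actE actS W"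
    and "finite_type W"
  shows "(\<forall>n c. zchain n c \<longrightarrow> Linf_fs M n (Phi W n c))
    \<and> (\<forall>n c d. zchain n c \<longrightarrow> zchain n d \<longrightarrow>
          aeq M n (Phi W n (\<lambda>es. c es + d es)) (\<lambda>x ss. Phi W n c x ss + Phi W n d x ss))
    \<and> (\<forall>n c g. zchain n c \<longrightarrow> aeq M n (Phi W n (actC actE g c)) (actL actX actS g (Phi W n c)))
    \<and> (\<forall>n c. zchain (Suc n) c \<longrightarrow> aeq M n (bdL (Phi W (Suc n) c)) (Phi W n (bdE c)))
    \<and> (\<forall>c. zchain 0 c \<longrightarrow> (AE x in M. augS (Phi W 0 c) x = augE c))"
proof -
  have "sigma_finite_measure M" and gX: "group_action actX"
    using assms(1) by (auto simp: standard_gamma_space_def prob_space_imp_sigma_finite)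
  from assms(5) have gS: "group_action actS"
    and Wm: "\<forall>s. W s \<in> sets (M \<Otimes>\<^sub>M count_space UNIV)"
    and disj: "disjoint_family W"
    and null: "space (M \<Otimes>\<^sub>M count_space UNIV) - (\<Union>s. W s) \<in> null_sets (M \<Otimes>\<^sub>M count_space UNIV)"
    and eqv: "\<forall>g s. (\<lambda>(x, e). (actX g x, actE g e)) ` W s = W (actS g s)"
    unfolding equivariant_partition_def by blast+
  have cov: "AE x in M. \<forall>e. \<exists>s. (x, e) \<in> W s"
    using \<open>sigma_finite_measure M\<close> null by (rule AE_in_some_cell)
  have "AE p in M \<Otimes>\<^sub>M count_space (tuples n :: 's list set). \<forall>e. \<exists>s. (fst p, e) \<in> W s" for n
    by (rule AE_pair_fst[OF sigma_finite_measure_count_space_countable cov]) simp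
  then have "aeq M n (bdL (Phi W (Suc n) c)) (Phi W n (bdE c))" if "zchain (Suc n) c" for n c
    unfolding aeq_def by (rule eventually_mono) (rule bdL_Phi[OF disj that])
  moreover have "AE x in M. augS (Phi W 0 c) x = augE c" if "zchain 0 c" for c
    using cov by (rule eventually_mono) (rule augS_Phi[OF disj that])
  moreover have "aeq M n (Phi W n (\<lambda>es. c es + d es)) (\<lambda>x ss. Phi W n c x ss + Phi W n d x ss)"
    if "zchain n c" "zchain n d" for n c d
    by (simp add: aeq_def Phi_add[OF that])
  ultimately show ?thesis
    using Linf_fs_Phi[OF Wm assms(6)] by (simp add: aeq_def Phi_actC[OF gX assms(3) gS eqv])
qed

end
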